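(* For every $\lambda\in\Lambda$ one has $W_\lambda=\bigcap_{i=0}^{r+1}\mathrm{Stab}(R_i^\lambda)$, where $\mathrm{Stab}(X)=\{g\in W\mid g(X)=X\}$ for $X\subseteq\mathbb{Z}$.
   Context: Fix integers $r\ge 0$, $d\ge 2$, set $D=2d+2$. Let $W$ be the group of bijections $g:\mathbb{Z}\to\mathbb{Z}$ with $g(i+D)=g(i)+D$, $g(-i)=-g(i)$ for all $i$; it is a Coxeter group with simple reflections $s_0,\dots,s_d$ where ($W$-elements being determined by their values on $1,\dots,d$) $s_0(1)=-1$, $s_0(k)=k$ ($2\le k\le d$); $s_d(d)=d+2$, $s_d(k)=k$ ($k<d$); and $s_i$ ($1\le i\le d-1$) swaps $i,i+1$ and fixes the other $k\in[1..d]$. Let $\Lambda$ be the set of $\lambda=(\lambda_0,\dots,\lambda_{r+1})\in\mathbb{N}^{r+2}$ with $\sum\lambda_i=d$; put $\lambda_{0,i}=\lambda_0+\dots+\lambda_i$. $W_\lambda$ is the subgroup generated by $\{s_0,\dots,s_d\}\setminus\{s_{\lambda_{0,0}},s_{\lambda_{0,1}},\dots,s_{\lambda_{0,r}}\}$. Define integer intervals $R_0^\lambda=[-\lambda_0..\lambda_0]$, $R_i^\lambda=(\lambda_{0,i-1}..\lambda_{0,i}]$ for $1\le i\le r$, $R^\lambda_{r+1}=[d+1-\lambda_{r+1}..d+1+\lambda_{r+1}]$ (here $[a..b]$, $(a..b]$ denote integer intervals). *)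

theory Defs
  imports Main
begin

definition Dper :: "nat \<Rightarrow> int" where
  "Dper d = 2 * int d + 2"

text \<open>The affine Weyl group W (type C) as a set of bijections of the integers.\<close>
definition Wgrp :: "nat \<Rightarrow> (int \<Rightarrow> int) set" where
  "Wgrp d = {g. bij g \<and> (\<forall>i. g (i + Dper d) = g i + Dper d) \<and> (\<forall>i. g (- i) = - g i)}"

text \<open>Unique extension to Z (via g(i+D)=g(i)+D, g(-i)=-g(i)) of values prescribed on 1..d.\<close>
definition ext :: "nat \<Rightarrow> (int \<Rightarrow> int) \<Rightarrow> int \<Rightarrow> int" where
  "ext d f i = (let D = Dper d; m = i mod D; q = i div D in
     if m = 0 \<or> m = int d + 1 then i
     else if m \<le> int d then f m + q * D
     else (q + 1) * D - f (D - m))"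

definition sref :: "nat \<Rightarrow> nat \<Rightarrow> int \<Rightarrow> int" where
  "sref d j = ext d (\<lambda>k.
     if j = 0 then (if k = 1 then -1 else k)
     else if j = d then (if k = int d then int d + 2 else k)
     else (if k = int j then int j + 1 else if k = int j + 1 then int j else k))"

inductive_set gen_group :: "(int \<Rightarrow> int) set \<Rightarrow> (int \<Rightarrow> int) set" for S where
  gen_id: "id \<in> gen_group S"
| gen_mult: "s \<in> S \<Longrightarrow> g \<in> gen_group S \<Longrightarrow> s \<circ> g \<in> gen_group S"
| gen_inv: "s \<in> S \<Longrightarrow> g \<in> gen_group S \<Longrightarrow> inv s \<circ> g \<in> gen_group S"

definition lsum :: "(nat \<Rightarrow> nat) \<Rightarrow> nat \<Rightarrow> nat" where
  "lsum lam i = (\<Sum>k\<le>i. lam k)"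

text \<open>Lambda: lam_0,...,lam_{r+1} natural numbers summing to d (values beyond r+1 irrelevant).\<close>
definition in_Lambda :: "nat \<Rightarrow> nat \<Rightarrow> (nat \<Rightarrow> nat) \<Rightarrow> bool" where
  "in_Lambda d r lam \<longleftrightarrow> (\<Sum>k\<le>r+1. lam k) = d"

definition Wlam :: "nat \<Rightarrow> nat \<Rightarrow> (nat \<Rightarrow> nat) \<Rightarrow> (int \<Rightarrow> int) set" where
  "Wlam d r lam = gen_group {sref d j | j. j \<le> d \<and> j \<notin> {lsum lam i | i. i \<le> r}}"

definition Rset :: "nat \<Rightarrow> nat \<Rightarrow> (nat \<Rightarrow> nat) \<Rightarrow> nat \<Rightarrow> int set" where
  "Rset d r lam i =
     (if i = 0 then {- int (lam 0) .. int (lam 0)}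
      else if i \<le> r then {int (lsum lam (i - 1)) <.. int (lsum lam i)}
      else {int d + 1 - int (lam (r + 1)) .. int d + 1 + int (lam (r + 1))})"

definition Stab :: "nat \<Rightarrow> int set \<Rightarrow> (int \<Rightarrow> int) set" where
  "Stab d X = {g \<in> Wgrp d. g ` X = X}"

end

theory Submission
  imports Defs
begin

text \<open>The inclusion \<open>W\<^sub>\<lambda> \<subseteq> \<Inter> Stab\<close> is checked on generators: a simple reflection
\<open>s\<^sub>j\<close> with \<open>j\<close> not a breakpoint \<open>\<lambda>\<^sub>0\<^sub>,\<^sub>i\<close> moves only points of one block \<open>R\<^sub>i\<close>.
For the converse, consider on the stabiliser the potential
\<open>\<Phi>(g) = \<Sum>\<^sub>k w(k) g(k)\<close> over \<open>k = 1..d\<close>, where \<open>w(k) = k\<close> up to the last breakpoint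
\<open>\<lambda>\<^sub>0\<^sub>,\<^sub>r\<close> and \<open>w(k) = k - d - 1\<close> beyond it. It is bounded, since elements of the
stabiliser map \<open>1..d\<close> into \<open>[-d..2d+1]\<close>, and if no allowed \<open>s\<^sub>j\<close> raises \<open>\<Phi>(g s\<^sub>j)\<close>
above \<open>\<Phi>(g)\<close>, then \<open>g\<close> is increasing on every block, keeps each block's end points
inside it, and is therefore the identity. Hence every element of the stabiliser is
reached from the identity by multiplying with allowed generators.\<close>

definition equivariant :: "nat \<Rightarrow> (int \<Rightarrow> int) \<Rightarrow> bool" where
  "equivariant d g \<longleftrightarrow> (\<forall>i. g (i + Dper d) = g i + Dper d) \<and> (\<forall>i. g (- i) = - g i)"

lemma Wgrp_iff: "g \<in> Wgrp d \<longleftrightarrow> bij g \<and> equivariant d g"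
  by (simp add: Wgrp_def equivariant_def)

lemma equivariant_id: "equivariant d id"
  by (simp add: equivariant_def)

lemma equivariant_comp: "equivariant d g \<Longrightarrow> equivariant d h \<Longrightarrow> equivariant d (g \<circ> h)"
  by (simp add: equivariant_def)

lemma equivariant_uminus: "equivariant d g \<Longrightarrow> g (- i) = - g i"
  by (simp add: equivariant_def)

lemma equivariant_zero: "equivariant d g \<Longrightarrow> g 0 = 0"
  using equivariant_uminus[of d g 0] by simp

lemma equivariant_reflect:
  assumes "equivariant d g"
  shows "g (Dper d - i) = Dper d - g i"
proof -
  have "g (- i + Dper d) = g (- i) + Dper d"
    using assms unfolding equivariant_def by blast
  then show ?thesis using equivariant_uminus[OF assms, of i] by simp
qed

lemma equivariant_mid: "equivariant d g \<Longrightarrow> g (int d + 1) = int d + 1"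
  using equivariant_reflect[of d g "int d + 1"] by (simp add: Dper_def)

lemma equivariant_shift:
  assumes "equivariant d g"
  shows "g (i + q * Dper d) = g i + q * Dper d"
proof (induction q rule: int_induct[where k = 0])
  case base
  then show ?case by simp
next
  case (step1 q)
  have "g (i + (q + 1) * Dper d) = g (i + q * Dper d + Dper d)"
    by (simp add: algebra_simps)
  also have "\<dots> = g (i + q * Dper d) + Dper d"
    using assms by (simp add: equivariant_def)
  finally show ?case using step1 by (simp add: algebra_simps)
next
  case (step2 q)
  have "g (i + q * Dper d) = g (i + (q - 1) * Dper d + Dper d)"
    by (simp add: algebra_simps)
  also have "\<dots> = g (i + (q - 1) * Dper d) + Dper d"
    using assms by (simp add: equivariant_def)
  finally show ?case using step2 by (simp add: algebra_simps)
qed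

text \<open>Every integer is congruent mod \<open>D\<close> to \<open>0\<close>, \<open>d + 1\<close>, a point of \<open>1..d\<close>, or the
reflection \<open>D - k\<close> of such a point.\<close>

lemma equivariant_eqI:
  assumes g: "equivariant d g" and h: "equivariant d h"
    and base: "\<And>k. k \<in> {1..int d} \<Longrightarrow> g k = h k"
  shows "g = h"
proof
  fix i
  define D where "D = Dper d"
  define m where "m = i mod D"
  have D: "D > 0" by (simp add: D_def Dper_def)
  then have m: "0 \<le> m" "m < D" by (auto simp: m_def)
  have "g m = h m"
  proof -
    consider "m = 0" | "m \<in> {1..int d}" | "m = int d + 1" | "D - m \<in> {1..int d}"
      using m by (fastforce simp: D_def Dper_def)
    then show ?thesis
    proof cases
      case 4
      have "g m = D - g (D - m)"
        using equivariant_reflect[OF g, of "D - m"] by (simp add: D_def)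
      also have "\<dots> = D - h (D - m)" using base 4 by simp
      also have "\<dots> = h m"
        using equivariant_reflect[OF h, of "D - m"] by (simp add: D_def)
      finally show ?thesis .
    qed (use base equivariant_zero[OF g] equivariant_zero[OF h]
           equivariant_mid[OF g] equivariant_mid[OF h] in auto)
  qed
  moreover have "i = m + (i div D) * D" by (simp add: m_def)
  ultimately show "g i = h i"
    using equivariant_shift[OF g] equivariant_shift[OF h] by (metis D_def)
qed

lemma equivariant_ext: "equivariant d (ext d f)"
proof -
  define D where "D = Dper d"
  have D: "D > 0" by (simp add: D_def Dper_def)
  have periodic: "ext d f (i + D) = ext d f i + D" for i
  proof -
    have "(i + D) mod D = i mod D" "(i + D) div D = i div D + 1"
      using D by (auto simp: div_add_self2)
    then show ?thesis unfolding ext_def Let_def D_def[symmetric] by (auto simp: algebra_simps)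
  qed
  have odd: "ext d f (- i) = - ext d f i" for i
  proof (cases "i mod D = 0")
    case True
    then have "(- i) mod D = 0" by (simp add: zmod_zminus1_eq_if)
    with True show ?thesis unfolding ext_def Let_def D_def[symmetric] by simp
  next
    case False
    define m where "m = i mod D"
    define q where "q = i div D"
    have i: "i = m + q * D" by (simp add: m_def q_def)
    have m: "0 < m" "m < D"
      using D False pos_mod_sign[OF D, of i] pos_mod_bound[OF D, of i] by (auto simp: m_def)
    have mod: "(- i) mod D = D - m" and div: "(- i) div D = - q - 1"
      using False D by (simp_all add: m_def q_def zmod_zminus1_eq_if zdiv_zminus1_eq_if)
    have "ext d f i = (if m = int d + 1 then i else if m \<le> int d then f m + q * D
                       else (q + 1) * D - f (D - m))"
      using False unfolding ext_def Let_def D_def[symmetric] m_def q_def by simp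
    moreover have "ext d f (- i) = (if D - m = int d + 1 then - i
        else if D - m \<le> int d then f (D - m) + (- q - 1) * D else (- q) * D - f m)"
      using False mod div m unfolding ext_def Let_def D_def[symmetric] by simp
    ultimately show ?thesis using m i by (auto simp: D_def Dper_def algebra_simps)
  qed
  show ?thesis using periodic odd by (simp add: equivariant_def D_def)
qed

lemma ext_on_base: "k \<in> {1..int d} \<Longrightarrow> ext d f k = f k"
proof -
  assume k: "k \<in> {1..int d}"
  then have "k mod Dper d = k" "k div Dper d = 0" by (auto simp: Dper_def)
  with k show ?thesis unfolding ext_def Let_def by auto
qed

lemma sref_on_base:
  "k \<in> {1..int d} \<Longrightarrow> sref d j k =
     (if j = 0 then (if k = 1 then -1 else k)
      else if j = d then (if k = int d then int d + 2 else k)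
      else (if k = int j then int j + 1 else if k = int j + 1 then int j else k))"
  unfolding sref_def by (simp add: ext_on_base)

lemma equivariant_sref: "equivariant d (sref d j)"
  unfolding sref_def by (rule equivariant_ext)

lemma sref_comp_self:
  assumes "d \<ge> 2" "j \<le> d"
  shows "sref d j \<circ> sref d j = id"
proof (rule equivariant_eqI[OF equivariant_comp[OF equivariant_sref equivariant_sref] equivariant_id])
  fix k assume k: "k \<in> {1..int d}"
  let ?s = "sref d j"
  have "j = 0 \<Longrightarrow> ?s (-1) = 1"
    using equivariant_uminus[OF equivariant_sref, of d j 1] sref_on_base[of 1 d j] assms
    by auto
  moreover have "j = d \<Longrightarrow> ?s (int d + 2) = int d"
    using equivariant_reflect[OF equivariant_sref, of d j "int d"] sref_on_base[of "int d" d j] assms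
    by (simp add: Dper_def)
  moreover have "0 < j \<Longrightarrow> j < d \<Longrightarrow> int j \<in> {1..int d} \<and> int j + 1 \<in> {1..int d}"
    by auto
  ultimately show "(?s \<circ> ?s) k = id k"
    using sref_on_base[OF k, of j] sref_on_base[of "int j" d j] sref_on_base[of "int j + 1" d j] assms
    by (auto split: if_splits)
qed

lemma sref_in_Wgrp: "d \<ge> 2 \<Longrightarrow> j \<le> d \<Longrightarrow> sref d j \<in> Wgrp d"
  using Wgrp_iff equivariant_sref sref_comp_self o_bij by metis

lemma Stab_comp:
  assumes "g \<in> Stab d X" "h \<in> Stab d X"
  shows "g \<circ> h \<in> Stab d X"
proof -
  have "(g \<circ> h) ` X = g ` (h ` X)" by (rule image_comp[symmetric])
  with assms show ?thesis unfolding Stab_def Wgrp_iff by (simp add: bij_comp equivariant_comp)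
qed

lemma id_in_Stab: "id \<in> Stab d X"
  unfolding Stab_def Wgrp_iff by (simp add: equivariant_id)

lemma involution_in_StabI:
  assumes "s \<in> Wgrp d" "s \<circ> s = id" "s ` X \<subseteq> X"
  shows "s \<in> Stab d X"
proof -
  have "X = s ` (s ` X)" using assms(2) by (simp add: image_comp)
  with assms(3) have "X \<subseteq> s ` X" by blast
  with assms show ?thesis by (auto simp: Stab_def)
qed

lemma gen_group_comp_right: "h \<in> gen_group S \<Longrightarrow> s \<in> S \<Longrightarrow> h \<circ> s \<in> gen_group S"
proof (induction h rule: gen_group.induct)
  case gen_id
  then show ?case using gen_group.gen_mult[OF _ gen_group.gen_id] by simp
next
  case (gen_mult s' g)
  then show ?case by (metis comp_assoc gen_group.gen_mult)
next
  case (gen_inv s' g)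
  then show ?case by (metis comp_assoc gen_group.gen_inv)
qed

lemma gen_group_subset:
  assumes "id \<in> G" "\<And>g h. g \<in> G \<Longrightarrow> h \<in> G \<Longrightarrow> g \<circ> h \<in> G"
    and "S \<subseteq> G" "\<And>s. s \<in> S \<Longrightarrow> s \<circ> s = id"
  shows "gen_group S \<subseteq> G"
proof
  fix g assume "g \<in> gen_group S"
  then show "g \<in> G"
  proof (induction g rule: gen_group.induct)
    case (gen_inv s g)
    then have "inv s = s" using assms(4) inv_unique_comp by blast
    with gen_inv assms(2,3) show ?case by (metis subsetD)
  qed (use assms in blast)+
qed

text \<open>A discrete gradient ascent: \<open>\<Phi>\<close> strictly increases along \<open>g \<mapsto> g \<circ> s\<close> until
\<open>g = id\<close>, and the step can be undone because \<open>s\<close> is an involution.\<close>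

lemma subset_gen_group_by_ascent:
  fixes \<Phi> :: "(int \<Rightarrow> int) \<Rightarrow> int"
  assumes comp: "\<And>g h. g \<in> G \<Longrightarrow> h \<in> G \<Longrightarrow> g \<circ> h \<in> G"
    and S: "S \<subseteq> G" "\<And>s. s \<in> S \<Longrightarrow> s \<circ> s = id"
    and bounded: "\<And>g. g \<in> G \<Longrightarrow> \<Phi> g \<le> B"
    and ascent: "\<And>g. g \<in> G \<Longrightarrow> g \<noteq> id \<Longrightarrow> \<exists>s\<in>S. \<Phi> g < \<Phi> (g \<circ> s)"
  shows "G \<subseteq> gen_group S"
proof
  fix g assume "g \<in> G"
  then show "g \<in> gen_group S"
  proof (induction g rule: measure_induct_rule[where f = "\<lambda>g. nat (B - \<Phi> g)"])
    case (less g)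
    show ?case
    proof (cases "g = id")
      case True
      then show ?thesis using gen_group.gen_id by blast
    next
      case False
      then obtain s where s: "s \<in> S" and up: "\<Phi> g < \<Phi> (g \<circ> s)"
        using ascent less.prems by blast
      have gs: "g \<circ> s \<in> G" using comp less.prems S(1) s by blast
      with up bounded have "g \<circ> s \<in> gen_group S" using less.IH by fastforce
      then have "g \<circ> s \<circ> s \<in> gen_group S" using gen_group_comp_right s by blast
      then show ?thesis using S(2)[OF s] by (simp add: comp_assoc)
    qed
  qed
qed

definition breaks :: "(nat \<Rightarrow> nat) \<Rightarrow> nat \<Rightarrow> nat set" where
  "breaks lam r = {lsum lam i | i. i \<le> r}"

lemma lsum_mono: "i \<le> i' \<Longrightarrow> lsum lam i \<le> lsum lam i'"
  unfolding lsum_def by (rule sum_mono2) auto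

lemma lsum_0 [simp]: "lsum lam 0 = lam 0"
  by (simp add: lsum_def)

lemma lsum_last: "in_Lambda d r lam \<Longrightarrow> lsum lam r + lam (r + 1) = d"
  by (simp add: in_Lambda_def lsum_def)

lemma breaks_bounds: "b \<in> breaks lam r \<Longrightarrow> lam 0 \<le> b \<and> b \<le> lsum lam r"
  unfolding breaks_def using lsum_mono[of 0 _ lam] lsum_mono[of _ r lam] by auto

lemma last_in_breaks: "lsum lam r \<in> breaks lam r"
  unfolding breaks_def by blast

lemma Rset_cases:
  assumes "i \<le> r + 1"
  obtains "i = 0" "Rset d r lam i = {- int (lam 0)..int (lam 0)}"
  | "1 \<le> i" "i \<le> r" "Rset d r lam i = {int (lsum lam (i - 1)) + 1..int (lsum lam i)}"
  | "i = r + 1" "Rset d r lam i = {int d + 1 - int (lam (r + 1))..int d + 1 + int (lam (r + 1))}"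
proof -
  have "{a<..b} = {a + 1..b}" for a b :: int by auto
  then show ?thesis using assms that by (cases "i = 0"; cases "i \<le> r") (auto simp: Rset_def)
qed

lemma Rset_cover:
  assumes L: "in_Lambda d r lam" and k: "k \<in> {1..int d}"
  shows "\<exists>i\<in>{0..r + 1}. k \<in> Rset d r lam i"
proof -
  have "\<exists>i\<in>{1..n}. k \<in> {int (lsum lam (i - 1))<..int (lsum lam i)}"
    if "int (lam 0) < k" "k \<le> int (lsum lam n)" for n
    using that
  proof (induction n)
    case (Suc n)
    then show ?case
      by (cases "k \<le> int (lsum lam n)") (force simp: lsum_def)+
  qed simp
  then show ?thesis
    using k lsum_last[OF L]
    by (cases "k \<le> int (lam 0)"; cases "k \<le> int (lsum lam r)") (force simp: Rset_def)+
qed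

lemma Rset_bounded:
  assumes L: "in_Lambda d r lam" and i: "i \<le> r + 1"
  shows "Rset d r lam i \<subseteq> {- int d..2 * int d + 1}"
  using i
proof (cases rule: Rset_cases[where d = d and lam = lam])
  case 2
  then show ?thesis
    using lsum_mono[of i r lam] lsum_last[OF L] by auto
qed (use lsum_mono[of 0 r lam] lsum_last[OF L] in auto)

lemma consecutive_in_Rset_not_break:
  assumes L: "in_Lambda d r lam" and i: "i \<le> r + 1"
    and m: "1 \<le> m" "m \<in> Rset d r lam i" "m + 1 \<in> Rset d r lam i"
  shows "nat m \<notin> breaks lam r"
proof
  assume b: "nat m \<in> breaks lam r"
  then obtain i' where i': "i' \<le> r" "nat m = lsum lam i'" by (auto simp: breaks_def)
  from i show False
  proof (cases rule: Rset_cases[where d = d and lam = lam])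
    case 1
    then show False using b m breaks_bounds by fastforce
  next
    case 2
    have "int (lsum lam i') = m" using i'(2) m(1) by simp
    then show False
      using 2 m lsum_mono[of i' "i - 1" lam] lsum_mono[of i i' lam]
      by (cases "i' < i") (auto, linarith)
  next
    case 3
    then show False using b m breaks_bounds lsum_last[OF L] by fastforce
  qed
qed

lemma equivariant_maps_centred_interval:
  assumes g: "equivariant d g" and pos: "g ` {1..a} \<subseteq> {- a..a}"
  shows "g ` {- a..a} \<subseteq> {- a..a}"
proof
  fix y assume "y \<in> g ` {- a..a}"
  then obtain x where x: "x \<in> {- a..a}" "y = g x" by blast
  then consider "x = 0" | "x \<in> {1..a}" | "- x \<in> {1..a}" by fastforce
  then show "y \<in> {- a..a}"
  proof cases
    case 3
    then have "g (- x) \<in> {- a..a}" using pos by blast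
    then show ?thesis using x equivariant_uminus[OF g, of "- x"] by auto
  qed (use x pos equivariant_zero[OF g] in \<open>auto simp: image_subset_iff\<close>)
qed

lemma equivariant_maps_interval_around_mid:
  assumes g: "equivariant d g"
    and low: "g ` {int d + 1 - c..int d} \<subseteq> {int d + 1 - c..int d + 1 + c}"
  shows "g ` {int d + 1 - c..int d + 1 + c} \<subseteq> {int d + 1 - c..int d + 1 + c}"
proof
  fix y assume "y \<in> g ` {int d + 1 - c..int d + 1 + c}"
  then obtain x where x: "x \<in> {int d + 1 - c..int d + 1 + c}" "y = g x" by blast
  then consider "x = int d + 1" | "x \<in> {int d + 1 - c..int d}" | "Dper d - x \<in> {int d + 1 - c..int d}"
    by (fastforce simp: Dper_def)
  then show "y \<in> {int d + 1 - c..int d + 1 + c}"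
  proof cases
    case 3
    then have "g (Dper d - x) \<in> {int d + 1 - c..int d + 1 + c}" using low by blast
    then show ?thesis
      using x equivariant_reflect[OF g, of "Dper d - x"] by (auto simp: Dper_def)
  qed (use x low equivariant_mid[OF g] in \<open>auto simp: image_subset_iff\<close>)
qed

lemma sref_maps_Rset:
  assumes d: "d \<ge> 2" and L: "in_Lambda d r lam"
    and j: "j \<le> d" "j \<notin> breaks lam r" and i: "i \<le> r + 1"
  shows "sref d j ` Rset d r lam i \<subseteq> Rset d r lam i"
proof -
  let ?s = "sref d j"
  have last: "lsum lam r + lam (r + 1) = d" by (rule lsum_last[OF L])
  have j0: "j \<noteq> lam 0" and jr: "j \<noteq> lsum lam r"
    using j(2) breaks_def by force+
  have l0: "lam 0 \<le> lsum lam r" using lsum_mono[of 0 r lam] by simp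
  from i show ?thesis
  proof (cases rule: Rset_cases[where d = d and lam = lam])
    case 1
    have "?s ` {1..int (lam 0)} \<subseteq> {- int (lam 0)..int (lam 0)}"
      using sref_on_base[of _ d j] j0 l0 last by (auto split: if_splits)
    then show ?thesis using 1 equivariant_maps_centred_interval[OF equivariant_sref] by simp
  next
    case 2
    have "j \<noteq> lsum lam i" "j \<noteq> lsum lam (i - 1)" using j(2) 2 by (auto simp: breaks_def)
    moreover have "lam 0 \<le> lsum lam (i - 1)" "lsum lam (i - 1) \<le> lsum lam i" "lsum lam i \<le> d"
      using lsum_mono[of 0 "i - 1" lam] lsum_mono[of "i - 1" i lam] lsum_mono[of i r lam] 2 last
      by auto
    ultimately show ?thesis
      using 2 sref_on_base[of _ d j] j0 by (auto split: if_splits)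
  next
    case 3
    have "?s ` {int d + 1 - int (lam (r + 1))..int d}
          \<subseteq> {int d + 1 - int (lam (r + 1))..int d + 1 + int (lam (r + 1))}"
      using sref_on_base[of _ d j] j0 jr l0 last by (auto split: if_splits)
    then show ?thesis
      using 3 equivariant_maps_interval_around_mid[OF equivariant_sref] by simp
  qed
qed

definition block_stabilizer :: "nat \<Rightarrow> nat \<Rightarrow> (nat \<Rightarrow> nat) \<Rightarrow> (int \<Rightarrow> int) set" where
  "block_stabilizer d r lam = (\<Inter>i\<in>{0..r + 1}. Stab d (Rset d r lam i))"

lemma block_stabilizerD:
  assumes "g \<in> block_stabilizer d r lam" "i \<le> r + 1" "x \<in> Rset d r lam i"
  shows "g x \<in> Rset d r lam i"
proof -
  have "g \<in> Stab d (Rset d r lam i)"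
    using assms(1,2) unfolding block_stabilizer_def by auto
  with assms(3) show ?thesis unfolding Stab_def by blast
qed

lemma block_stabilizer_Wgrp: "g \<in> block_stabilizer d r lam \<Longrightarrow> g \<in> Wgrp d"
  unfolding block_stabilizer_def Stab_def by auto

lemma id_in_block_stabilizer: "id \<in> block_stabilizer d r lam"
  unfolding block_stabilizer_def by (simp add: id_in_Stab)

lemma block_stabilizer_comp:
  "g \<in> block_stabilizer d r lam \<Longrightarrow> h \<in> block_stabilizer d r lam \<Longrightarrow> g \<circ> h \<in> block_stabilizer d r lam"
  unfolding block_stabilizer_def by (simp add: Stab_comp)

lemma sref_in_block_stabilizer:
  assumes "d \<ge> 2" "in_Lambda d r lam" "j \<le> d" "j \<notin> breaks lam r"
  shows "sref d j \<in> block_stabilizer d r lam"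
  unfolding block_stabilizer_def
  using involution_in_StabI[OF sref_in_Wgrp sref_comp_self sref_maps_Rset] assms by auto

lemma block_stabilizer_bounded:
  assumes L: "in_Lambda d r lam" and g: "g \<in> block_stabilizer d r lam" and k: "k \<in> {1..int d}"
  shows "\<bar>g k\<bar> \<le> 2 * int d + 1"
proof -
  obtain i where i: "i \<le> r + 1" "k \<in> Rset d r lam i" using Rset_cover[OF L k] by auto
  then have "g k \<in> Rset d r lam i" using block_stabilizerD[OF g] by blast
  then have "- int d \<le> g k" "g k \<le> 2 * int d + 1" using Rset_bounded[OF L i(1)] by auto
  then show ?thesis by linarith
qed

definition weight :: "nat \<Rightarrow> nat \<Rightarrow> int \<Rightarrow> int" where
  "weight d L k = (if k \<le> int L then k else k - (int d + 1))"

definition potential :: "nat \<Rightarrow> nat \<Rightarrow> (int \<Rightarrow> int) \<Rightarrow> int" where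
  "potential d L g = (\<Sum>k\<in>{1..int d}. weight d L k * g k)"

lemma potential_bounded:
  assumes "L \<le> d" and bound: "\<And>k. k \<in> {1..int d} \<Longrightarrow> \<bar>g k\<bar> \<le> M"
  shows "potential d L g \<le> int d * (int d * M)"
proof -
  have "weight d L k * g k \<le> int d * M" if k: "k \<in> {1..int d}" for k
  proof -
    have "\<bar>weight d L k\<bar> \<le> int d" using k assms(1) by (auto simp: weight_def)
    then have "\<bar>weight d L k\<bar> * \<bar>g k\<bar> \<le> int d * M"
      using bound[OF k] by (intro mult_mono) auto
    then show ?thesis by (metis abs_ge_self abs_mult order_trans)
  qed
  then have "potential d L g \<le> (\<Sum>k\<in>{1..int d}. int d * M)"
    unfolding potential_def by (rule sum_mono)
  then show ?thesis by simp
qed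

lemma potential_diff_local:
  assumes "T \<subseteq> {1..int d}" "\<And>k. k \<in> {1..int d} - T \<Longrightarrow> h k = g k"
  shows "potential d L h - potential d L g = (\<Sum>k\<in>T. weight d L k * (h k - g k))"
proof -
  have "potential d L h - potential d L g = (\<Sum>k\<in>{1..int d}. weight d L k * (h k - g k))"
    unfolding potential_def by (simp add: sum_subtractf[symmetric] right_diff_distrib)
  also have "\<dots> = (\<Sum>k\<in>T. weight d L k * (h k - g k))"
    using assms by (intro sum.mono_neutral_right) auto
  finally show ?thesis .
qed

lemma potential_comp_sref_swap:
  assumes "1 \<le> j" "j < d" "j \<noteq> L"
  shows "potential d L (g \<circ> sref d j) = potential d L g + g (int j) - g (int j + 1)"
proof -
  have "potential d L (g \<circ> sref d j) - potential d L g
        = (\<Sum>k\<in>{int j, int j + 1}. weight d L k * ((g \<circ> sref d j) k - g k))"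
    using assms by (intro potential_diff_local) (auto simp: sref_on_base)
  also have "\<dots> = weight d L (int j) * (g (int j + 1) - g (int j))
                  + weight d L (int j + 1) * (g (int j) - g (int j + 1))"
    using assms sref_on_base[of "int j" d j] sref_on_base[of "int j + 1" d j] by simp
  also have "weight d L (int j + 1) = weight d L (int j) + 1"
    using assms(3) by (auto simp: weight_def)
  finally show ?thesis by algebra
qed

lemma potential_comp_sref_first:
  assumes g: "equivariant d g" and "1 \<le> L" "1 \<le> d"
  shows "potential d L (g \<circ> sref d 0) = potential d L g - 2 * g 1"
proof -
  have "potential d L (g \<circ> sref d 0) - potential d L g
        = (\<Sum>k\<in>{1}. weight d L k * ((g \<circ> sref d 0) k - g k))"
    using assms by (intro potential_diff_local) (auto simp: sref_on_base)
  also have "\<dots> = - 2 * g 1"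
    using assms sref_on_base[of 1 d 0] equivariant_uminus[OF g, of 1] by (simp add: weight_def)
  finally show ?thesis by simp
qed

lemma potential_comp_sref_last:
  assumes g: "equivariant d g" and "L < d"
  shows "potential d L (g \<circ> sref d d) = potential d L g + 2 * g (int d) - Dper d"
proof -
  have "potential d L (g \<circ> sref d d) - potential d L g
        = (\<Sum>k\<in>{int d}. weight d L k * ((g \<circ> sref d d) k - g k))"
    using assms by (intro potential_diff_local) (auto simp: sref_on_base)
  moreover have "sref d d (int d) = Dper d - int d"
    using assms sref_on_base[of "int d" d d] by (simp add: Dper_def)
  ultimately show ?thesis
    using assms(2) equivariant_reflect[OF g, of "int d"] by (simp add: weight_def algebra_simps)
qed

lemma increasing_fixes_interval:
  fixes f :: "int \<Rightarrow> int"
  assumes inc: "\<And>m. lo \<le> m \<Longrightarrow> m < hi \<Longrightarrow> f m < f (m + 1)"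
    and ends: "lo \<le> f lo" "f hi \<le> hi" and k: "k \<in> {lo..hi}"
  shows "f k = k"
proof -
  have spread: "b - a \<le> f b - f a" if "lo \<le> a" "a \<le> b" "b \<le> hi" for a b
    using that(2,3)
  proof (induction b rule: int_ge_induct)
    case (step b)
    then show ?case using inc[of b] that(1) by fastforce
  qed simp
  show ?thesis using spread[of lo k] spread[of k hi] ends k by auto
qed

definition potential_maximal :: "nat \<Rightarrow> nat \<Rightarrow> (nat \<Rightarrow> nat) \<Rightarrow> (int \<Rightarrow> int) \<Rightarrow> bool" where
  "potential_maximal d r lam g \<longleftrightarrow> (\<forall>j. j \<le> d \<and> j \<notin> breaks lam r \<longrightarrow>
     potential d (lsum lam r) (g \<circ> sref d j) \<le> potential d (lsum lam r) g)"

lemma potential_maximal_step: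
  assumes g: "g \<in> Wgrp d" and maximal: "potential_maximal d r lam g"
    and m: "1 \<le> m" "m < int d" "nat m \<notin> breaks lam r"
  shows "g m < g (m + 1)"
proof -
  have "nat m \<noteq> lsum lam r" using m(3) last_in_breaks by metis
  moreover have "potential d (lsum lam r) (g \<circ> sref d (nat m)) \<le> potential d (lsum lam r) g"
    using maximal m unfolding potential_maximal_def by auto
  ultimately have "g m \<le> g (m + 1)"
    using potential_comp_sref_swap[of "nat m" d "lsum lam r" g] m by simp
  moreover have "g m \<noteq> g (m + 1)"
    using g by (metis Wgrp_iff bij_is_inj inj_eq add_cancel_left_right one_neq_zero)
  ultimately show ?thesis by simp
qed

lemma potential_maximal_first:
  assumes d: "1 \<le> d" and g: "g \<in> Wgrp d" and maximal: "potential_maximal d r lam g"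
    and l0: "lam 0 \<noteq> 0"
  shows "1 \<le> g 1"
proof -
  have eq: "equivariant d g" and inj: "inj g" using g by (auto simp: Wgrp_iff bij_is_inj)
  have "0 \<notin> breaks lam r" using breaks_bounds l0 by fastforce
  then have "potential d (lsum lam r) (g \<circ> sref d 0) \<le> potential d (lsum lam r) g"
    using maximal unfolding potential_maximal_def by auto
  moreover have "1 \<le> lsum lam r" using breaks_bounds[OF last_in_breaks[of lam r]] l0 by simp
  ultimately have "0 \<le> g 1" using potential_comp_sref_first[OF eq, of "lsum lam r"] d by simp
  moreover have "g 1 \<noteq> 0" using inj equivariant_zero[OF eq] by (metis inj_eq one_neq_zero)
  ultimately show ?thesis by simp
qed

lemma potential_maximal_last:
  assumes L: "in_Lambda d r lam" and g: "g \<in> Wgrp d" and maximal: "potential_maximal d r lam g"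
    and lr: "lam (r + 1) \<noteq> 0"
  shows "g (int d) \<le> int d"
proof -
  have eq: "equivariant d g" and inj: "inj g" using g by (auto simp: Wgrp_iff bij_is_inj)
  have Lr: "lsum lam r < d" using lsum_last[OF L] lr by simp
  then have "d \<notin> breaks lam r" using breaks_bounds by fastforce
  then have "potential d (lsum lam r) (g \<circ> sref d d) \<le> potential d (lsum lam r) g"
    using maximal unfolding potential_maximal_def by auto
  then have "g (int d) \<le> int d + 1"
    using potential_comp_sref_last[OF eq Lr] by (simp add: Dper_def)
  moreover have "g (int d) \<noteq> int d + 1"
    using inj equivariant_mid[OF eq] by (metis inj_eq add_cancel_left_right one_neq_zero)
  ultimately show ?thesis by simp
qed

lemma potential_maximal_is_id:
  assumes d: "d \<ge> 2" and L: "in_Lambda d r lam" and g: "g \<in> block_stabilizer d r lam"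
    and maximal: "potential_maximal d r lam g"
  shows "g = id"
proof -
  define Lr where "Lr = lsum lam r"
  have gW: "g \<in> Wgrp d" by (rule block_stabilizer_Wgrp[OF g])
  then have eq: "equivariant d g" by (simp add: Wgrp_iff)
  have last: "Lr + lam (r + 1) = d" unfolding Lr_def by (rule lsum_last[OF L])
  have block_step: "g m < g (m + 1)"
    if "i \<le> r + 1" "{lo..hi} \<subseteq> Rset d r lam i" "1 \<le> lo" "hi \<le> int d" "lo \<le> m" "m < hi"
    for i lo hi m
  proof -
    have "m \<in> Rset d r lam i" "m + 1 \<in> Rset d r lam i" using that by auto
    then show ?thesis
      using that consecutive_in_Rset_not_break[OF L, of i m]
      by (intro potential_maximal_step[OF gW maximal]) auto
  qed
  have first: "lam 0 \<noteq> 0 \<Longrightarrow> 1 \<le> g 1"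
    using potential_maximal_first[OF _ gW maximal] d by simp
  have final: "lam (r + 1) \<noteq> 0 \<Longrightarrow> g (int d) \<le> int d"
    using potential_maximal_last[OF L gW maximal] .
  show ?thesis
  proof (rule equivariant_eqI[OF eq equivariant_id])
    fix k assume k: "k \<in> {1..int d}"
    then obtain i where i: "i \<le> r + 1" "k \<in> Rset d r lam i"
      using Rset_cover[OF L] by (meson atLeastAtMost_iff)
    have stays: "g x \<in> Rset d r lam i" if "x \<in> Rset d r lam i" for x
      using block_stabilizerD[OF g i(1) that] .
    from i(1) have "g k = k"
    proof (cases rule: Rset_cases[where d = d and lam = lam])
      case 1
      have l0: "lam 0 \<le> d" using breaks_bounds[OF last_in_breaks[of lam r]] last unfolding Lr_def by simp
      show ?thesis
      proof (intro increasing_fixes_interval[where lo = 1 and hi = "int (lam 0)"])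
        show "g m < g (m + 1)" if "1 \<le> m" "m < int (lam 0)" for m
          using block_step[of i 1 "int (lam 0)" m] that 1 l0 by auto
      qed (use 1 k i stays first in auto)
    next
      case 2
      let ?lo = "int (lsum lam (i - 1)) + 1" and ?hi = "int (lsum lam i)"
      have hi: "?hi \<le> int d" using lsum_mono[of i r lam] 2 last by (simp add: Lr_def)
      show ?thesis
      proof (intro increasing_fixes_interval[where lo = ?lo and hi = ?hi])
        show "g m < g (m + 1)" if "?lo \<le> m" "m < ?hi" for m
          using block_step[of i ?lo ?hi m] that 2 hi by auto
      qed (use 2 i stays in auto)
    next
      case 3
      show ?thesis
      proof (intro increasing_fixes_interval[where lo = "int Lr + 1" and hi = "int d"])
        show "g m < g (m + 1)" if "int Lr + 1 \<le> m" "m < int d" for m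
          using block_step[of i "int Lr + 1" "int d" m] that 3 last by auto
      qed (use 3 i k last stays final in auto)
    qed
    then show "g k = id k" by simp
  qed
qed

theorem lemma2p2p1:
  fixes d r :: nat and lam :: "nat \<Rightarrow> nat"
  assumes "d \<ge> 2" and "in_Lambda d r lam"
  shows "Wlam d r lam = (\<Inter>i\<in>{0..r+1}. Stab d (Rset d r lam i))"
proof -
  define S where "S = sref d ` {j. j \<le> d \<and> j \<notin> breaks lam r}"
  have W: "Wlam d r lam = gen_group S"
    unfolding Wlam_def S_def breaks_def by (rule arg_cong[where f = gen_group]) blast
  have S_sub: "S \<subseteq> block_stabilizer d r lam"
    using sref_in_block_stabilizer[OF assms] by (auto simp: S_def)
  have S_inv: "s \<circ> s = id" if "s \<in> S" for s
    using that sref_comp_self[OF assms(1)] by (auto simp: S_def)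
  have "gen_group S \<subseteq> block_stabilizer d r lam"
    by (rule gen_group_subset[OF id_in_block_stabilizer block_stabilizer_comp S_sub S_inv])
  moreover have "block_stabilizer d r lam \<subseteq> gen_group S"
  proof (rule subset_gen_group_by_ascent[OF block_stabilizer_comp S_sub S_inv])
    show "potential d (lsum lam r) g \<le> int d * (int d * (2 * int d + 1))"
      if "g \<in> block_stabilizer d r lam" for g
      using that lsum_last[OF assms(2)] block_stabilizer_bounded[OF assms(2)]
      by (intro potential_bounded) auto
    show "\<exists>s\<in>S. potential d (lsum lam r) g < potential d (lsum lam r) (g \<circ> s)"
      if "g \<in> block_stabilizer d r lam" "g \<noteq> id" for g
      using that potential_maximal_is_id[OF assms] unfolding S_def potential_maximal_def by force
  qed
  ultimately show ?thesis unfolding W block_stabilizer_def by blast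
qed

end
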